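(* Let $A$ be a real $m\times m$ matrix, $f$ in the range of $A$, $y$ the minimal-norm solution of $Ay=f$. Fix $q\in(0,1)$, $\alpha_0>0$, $C>1$, $\varepsilon\in(0,1)$. For each $\delta\in(0,1)$ let $f_\delta\in\mathbb{R}^m$ satisfy $\|f_\delta-f\|\le\delta$ and $(1-q)\alpha_0q\|Q_{\alpha_0q}^{-1}f_\delta\|>C\delta^\varepsilon$, and let $n_\delta$ be the smallest integer $n\ge1$ with $G_n\le C\delta^\varepsilon$. Then $$\lim_{\delta\to0}\frac{\delta}{\sqrt{\alpha_0q^{n_\delta}}}=0.$$
   Context: $A^*$ is the transpose of $A$, $Q:=AA^*$, $Q_a:=Q+aI$ for $a>0$; $\|\cdot\|$ is the Euclidean norm. $G_0=0$ and $G_n=qG_{n-1}+(1-q)\alpha_0q^n\|Q_{\alpha_0q^n}^{-1}f_\delta\|$ for $n\ge1$. *)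

theory Defs
  imports "HOL-Analysis.Analysis"
begin

definition Qreg :: "real^'m^'m \<Rightarrow> real \<Rightarrow> real^'m^'m" where
  "Qreg A a = A ** transpose A + a *\<^sub>R mat 1"

fun Gseq :: "real^'m^'m \<Rightarrow> real \<Rightarrow> real \<Rightarrow> real^'m \<Rightarrow> nat \<Rightarrow> real" where
  "Gseq A q \<alpha>0 g 0 = 0"
| "Gseq A q \<alpha>0 g (Suc n) = q * Gseq A q \<alpha>0 g n
     + (1 - q) * \<alpha>0 * q ^ Suc n * norm (matrix_inv (Qreg A (\<alpha>0 * q ^ Suc n)) *v g)"

definition min_norm_solution :: "real^'m^'m \<Rightarrow> real^'m \<Rightarrow> real^'m \<Rightarrow> bool" where
  "min_norm_solution A f y \<longleftrightarrow> A *v y = f \<and> (\<forall>z. A *v z = f \<longrightarrow> norm y \<le> norm z)"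

end

theory Submission imports Defs begin

(* The proof has three layers.
   (1) Resolvent estimates: for a > 0 the matrix Q_a is invertible, and with
       |g - A y| <= d one has  a |Q_a^{-1} g| <= d + sqrt a |y| / 2.
   (2) Consequently the averaged sequence G_n obeys G_n <= d + |y| sqrt(a0) q^(n/2).
   (3) An abstract fact about the stopping rule "least n >= 1 with G_n <= T":
       if G_1 > T and G_n <= d + B r^n with d < T, the stopping index N is at
       least 2 and T - d < B r^(N-1).
   With T = C delta^eps this yields (C-1) delta^eps < |y| sqrt(a0 q^N) / sqrt q,
   i.e. delta / sqrt(a0 q^N) <= K delta^(1-eps), which tends to 0. *)

text \<open>This is the only structural property of \<open>Q\<^sub>a\<close> the proof uses.\<close>
lemma Qreg_quadratic_form:
  fixes A :: "real^'m^'m"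
  shows "inner (Qreg A a *v v) v = a * (norm v)\<^sup>2 + (norm (transpose A *v v))\<^sup>2"
proof -
  have "Qreg A a *v v = A *v (transpose A *v v) + a *\<^sub>R v"
    unfolding Qreg_def
    by (simp add: matrix_vector_mult_add_rdistrib matrix_vector_mul_assoc[symmetric]
        scaleR_matrix_vector_assoc[symmetric] del: transpose_matrix_vector)
  moreover have "inner (A *v w) v = inner w (transpose A *v v)" for w
    by (metis dot_lmul_matrix inner_commute transpose_matrix_vector)
  ultimately show ?thesis
    by (simp add: inner_add_left add.commute dot_square_norm)
qed

text \<open>For \<open>a > 0\<close> the form is positive definite, so \<open>Q\<^sub>a\<close> is invertible and
  \<open>matrix_inv\<close> really inverts it.\<close>
lemma Qreg_right_inverse:
  fixes A :: "real^'m^'m"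
  assumes "0 < a"
  shows "Qreg A a *v (matrix_inv (Qreg A a) *v g) = g"
proof -
  have "x = 0" if "Qreg A a *v x = 0" for x
  proof -
    have "a * (norm x)\<^sup>2 + (norm (transpose A *v x))\<^sup>2 = 0"
      using that Qreg_quadratic_form[of A a x] by simp
    then have "a * (norm x)\<^sup>2 = 0"
      using assms by (smt (verit) zero_le_power2 mult_nonneg_nonneg)
    then show "x = 0" using assms by simp
  qed
  then have "invertible (Qreg A a)"
    using matrix_left_invertible_ker invertible_left_inverse by blast
  then have "Qreg A a ** matrix_inv (Qreg A a) = mat 1"
    unfolding invertible_def matrix_inv_def by (rule someI_ex[THEN conjunct1])
  then show ?thesis by (simp add: matrix_vector_mul_assoc)
qed

lemma Qreg_inverse_energy:
  fixes A :: "real^'m^'m"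
  assumes "0 < a" and "v = matrix_inv (Qreg A a) *v g"
  shows "a * (norm v)\<^sup>2 + (norm (transpose A *v v))\<^sup>2 = inner g v"
  using Qreg_quadratic_form[of A a v] Qreg_right_inverse[OF assms(1), of A g] assms(2)
  by simp

lemma Qreg_inverse_bound:
  fixes A :: "real^'m^'m"
  assumes "0 < a"
  shows "a * norm (matrix_inv (Qreg A a) *v e) \<le> norm e"
proof -
  define v where "v = matrix_inv (Qreg A a) *v e"
  have "a * (norm v)\<^sup>2 \<le> inner e v"
    using Qreg_inverse_energy[OF assms v_def] by (smt (verit) zero_le_power2)
  also have "\<dots> \<le> norm e * norm v"
    by (rule Cauchy_Schwarz_ineq2[THEN order_trans[OF abs_ge_self]])
  finally have "(a * norm v) * norm v \<le> norm e * norm v"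
    by (simp add: power2_eq_square mult_ac)
  then have "a * norm v \<le> norm e"
    by (cases "norm v = 0") (use assms in auto)
  then show ?thesis by (simp add: v_def)
qed

text \<open>Exact-data part: \<open>a |Q\<^sub>a\<^sup>-\<^sup>1 A y| \<le> \<surd>a |y| / 2\<close>, the source of the
  decay rate \<open>\<surd>a\<close> without any smoothness assumption on \<open>y\<close>.\<close>
lemma Qreg_inverse_range_bound:
  fixes A :: "real^'m^'m"
  assumes "0 < a"
  shows "a * norm (matrix_inv (Qreg A a) *v (A *v y)) \<le> sqrt a * norm y / 2"
proof -
  define v where "v = matrix_inv (Qreg A a) *v (A *v y)"
  define t where "t = transpose A *v v"
  have "inner (A *v y) v = inner y t"
    unfolding t_def by (metis dot_lmul_matrix inner_commute transpose_matrix_vector)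
  then have "a * (norm v)\<^sup>2 + (norm t)\<^sup>2 = inner y t"
    using Qreg_inverse_energy[OF assms v_def] by (simp add: t_def)
  also have "\<dots> \<le> norm y * norm t"
    by (rule Cauchy_Schwarz_ineq2[THEN order_trans[OF abs_ge_self]])
  also have "\<dots> \<le> (norm t)\<^sup>2 + (norm y)\<^sup>2 / 4"
    using zero_le_power2[of "norm t - norm y / 2"] by (simp add: power2_eq_square algebra_simps)
  finally have "a * (norm v)\<^sup>2 \<le> (norm y)\<^sup>2 / 4" by simp
  then have "(a * norm v)\<^sup>2 \<le> a * ((norm y)\<^sup>2 / 4)"
    using assms by (simp add: power2_eq_square mult_ac)
  also have "\<dots> = (sqrt a * norm y / 2)\<^sup>2"
    using assms by (simp add: power_mult_distrib power_divide)
  finally have "(a * norm v)\<^sup>2 \<le> (sqrt a * norm y / 2)\<^sup>2" .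
  then have "a * norm v \<le> sqrt a * norm y / 2"
    by (rule power2_le_imp_le) (use assms in simp)
  then show ?thesis by (simp add: v_def)
qed

lemma Qreg_inverse_data_bound:
  fixes A :: "real^'m^'m"
  assumes "0 < a" and "norm (g - A *v y) \<le> d"
  shows "a * norm (matrix_inv (Qreg A a) *v g) \<le> d + sqrt a * norm y / 2"
proof -
  let ?M = "matrix_inv (Qreg A a)"
  have "?M *v g = ?M *v (A *v y) + ?M *v (g - A *v y)"
    by (simp add: matrix_vector_mult_diff_distrib)
  then have "a * norm (?M *v g) \<le> a * norm (?M *v (A *v y)) + a * norm (?M *v (g - A *v y))"
    using assms(1) by (metis distrib_left mult_left_mono norm_triangle_ineq less_imp_le)
  then show ?thesis
    using Qreg_inverse_bound[OF assms(1), of A "g - A *v y"]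
      Qreg_inverse_range_bound[OF assms(1), of A y] assms(2) by linarith
qed

text \<open>The induction closes because
  \<open>q = r\<^sup>2\<close> and \<open>r + (1 - r\<^sup>2)/2 \<le> 1\<close>, i.e. \<open>(1 - r)\<^sup>2 \<ge> 0\<close>.\<close>
lemma Gseq_bound:
  fixes A :: "real^'m^'m"
  assumes "0 < q" "q < 1" "0 < \<alpha>0" and data: "norm (g - A *v y) \<le> d"
  shows "Gseq A q \<alpha>0 g n \<le> d + norm y * sqrt \<alpha>0 * sqrt q ^ n"
proof (induction n)
  case 0
  have "0 \<le> d" using data norm_ge_zero order_trans by blast
  then show ?case using assms(3) by simp
next
  case (Suc n)
  define r where "r = sqrt q"
  define P where "P = norm y * sqrt \<alpha>0 * r ^ Suc n"
  have r: "0 < r" "r < 1" "r * r = q" using assms unfolding r_def by auto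
  have "0 \<le> P" unfolding P_def using r assms(3) by simp
  have step_pos: "0 < \<alpha>0 * q ^ Suc n" using assms by simp
  have "sqrt (\<alpha>0 * q ^ Suc n) = sqrt \<alpha>0 * r ^ Suc n"
    unfolding r_def by (simp add: real_sqrt_mult real_sqrt_power)
  then have new_term: "(\<alpha>0 * q ^ Suc n) * norm (matrix_inv (Qreg A (\<alpha>0 * q ^ Suc n)) *v g) \<le> d + P / 2"
    using Qreg_inverse_data_bound[OF step_pos data] unfolding P_def by (simp add: mult_ac)
  have IH: "Gseq A q \<alpha>0 g n \<le> d + norm y * sqrt \<alpha>0 * r ^ n" using Suc r_def by simp
  have "q * (norm y * sqrt \<alpha>0 * r ^ n) = r * P"
    unfolding P_def using r(3)[symmetric] by (simp add: mult_ac)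
  moreover have "Gseq A q \<alpha>0 g (Suc n) = q * Gseq A q \<alpha>0 g n
     + (1 - q) * ((\<alpha>0 * q ^ Suc n) * norm (matrix_inv (Qreg A (\<alpha>0 * q ^ Suc n)) *v g))"
    by (simp add: mult_ac)
  moreover have "\<dots> \<le> q * (d + norm y * sqrt \<alpha>0 * r ^ n) + (1 - q) * (d + P / 2)"
    by (rule add_mono; rule mult_left_mono) (use IH new_term assms in auto)
  ultimately have "Gseq A q \<alpha>0 g (Suc n) \<le> d + (r + (1 - r * r) / 2) * P"
    using r(3) by (simp add: algebra_simps)
  moreover have "r + (1 - r * r) / 2 \<le> 1"
    using zero_le_power2[of "1 - r"] by (simp add: power2_eq_square field_simps)
  ultimately show ?case
    using \<open>0 \<le> P\<close> mult_right_mono[of "r + (1 - r * r) / 2" 1 P] unfolding P_def r_def by linarith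
qed

text \<open>For any sequence dominated by \<open>d + B r\<^sup>n\<close> with \<open>r < 1\<close> and threshold
  \<open>T > d\<close>, the rule ``stop at the first \<open>n \<ge> 1\<close> with \<open>G n \<le> T\<close>'' terminates;
  if it does not stop at \<open>n = 1\<close>, the bound at the previous index shows
  that the stopping index \<open>N\<close> cannot be too large: \<open>T - d < B r\<^sup>N\<^sup>-\<^sup>1\<close>.\<close>
lemma stopping_index_bound:
  fixes G :: "nat \<Rightarrow> real"
  assumes "0 \<le> r" "r < 1"
    and bound: "\<And>n. G n \<le> d + B * r ^ n"
    and "d < T" and first: "T < G 1"
  defines "N \<equiv> LEAST n. 1 \<le> n \<and> G n \<le> T"
  shows "2 \<le> N" and "T - d < B * r ^ (N - 1)"
proof -
  have "(\<lambda>n. B * r ^ n) \<longlonglongrightarrow> 0"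
    using LIMSEQ_power_zero[of r] assms(1,2) by (intro tendsto_mult_right_zero) simp
  then have "eventually (\<lambda>n. B * r ^ n < T - d) sequentially"
    by (rule order_tendstoD(2)) (use \<open>d < T\<close> in simp)
  then obtain n0 where "B * r ^ Suc n0 < T - d"
    unfolding eventually_sequentially by (meson le_SucI order_refl)
  then have "1 \<le> Suc n0 \<and> G (Suc n0) \<le> T" using bound[of "Suc n0"] by simp
  then have stop: "1 \<le> N \<and> G N \<le> T" unfolding N_def by (rule LeastI)
  with first have "N \<noteq> 1" by auto
  with stop show N2: "2 \<le> N" by simp
  have "\<not> (1 \<le> N - 1 \<and> G (N - 1) \<le> T)"
    unfolding N_def by (rule not_less_Least) (use N2 N_def in simp)
  then have "T < G (N - 1)" using N2 by auto
  then show "T - d < B * r ^ (N - 1)" using bound[of "N - 1"] by linarith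
qed

lemma stopping_step_size_bound:
  fixes A :: "real^'m^'m"
  assumes "0 < q" "q < 1" "0 < \<alpha>0" "1 < C" "\<epsilon> < 1" "0 < \<delta>" "\<delta> < 1"
    and data: "norm (g - A *v y) \<le> \<delta>"
    and first: "C * \<delta> powr \<epsilon> < (1 - q) * \<alpha>0 * q * norm (matrix_inv (Qreg A (\<alpha>0 * q)) *v g)"
  defines "N \<equiv> LEAST n. 1 \<le> n \<and> Gseq A q \<alpha>0 g n \<le> C * \<delta> powr \<epsilon>"
  shows "\<delta> / sqrt (\<alpha>0 * q ^ N) \<le> norm y / (sqrt q * (C - 1)) * \<delta> powr (1 - \<epsilon>)"
proof -
  define r where "r = sqrt q"
  define X where "X = sqrt \<alpha>0 * r ^ (N - 1)"
  have r: "0 < r" "r < 1" using assms(1,2) unfolding r_def by auto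
  have "\<delta> \<le> \<delta> powr \<epsilon>" using powr_mono'[of \<epsilon> 1 \<delta>] assms(5,6,7) by simp
  then have gap: "(C - 1) * \<delta> powr \<epsilon> \<le> C * \<delta> powr \<epsilon> - \<delta>" by (simp add: algebra_simps)
  have gap_pos: "0 < (C - 1) * \<delta> powr \<epsilon>" using assms(4,6) by simp
  have "2 \<le> N" and "C * \<delta> powr \<epsilon> - \<delta> < norm y * sqrt \<alpha>0 * r ^ (N - 1)"
    using stopping_index_bound[of r "Gseq A q \<alpha>0 g" \<delta> "norm y * sqrt \<alpha>0" "C * \<delta> powr \<epsilon>"]
      Gseq_bound[OF assms(1-3) data] r gap gap_pos first
    unfolding N_def r_def by (auto simp: mult_ac)
  with gap have lower: "(C - 1) * \<delta> powr \<epsilon> \<le> norm y * X" unfolding X_def by (simp add: mult_ac)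
  have "r ^ N = r * r ^ (N - 1)" using \<open>2 \<le> N\<close> by (metis Suc_diff_1 power_Suc less_le_trans pos2)
  then have "sqrt (\<alpha>0 * q ^ N) = r * X"
    unfolding X_def r_def by (simp add: real_sqrt_mult real_sqrt_power mult_ac)
  then have "\<delta> / sqrt (\<alpha>0 * q ^ N) = \<delta> * norm y / (r * (norm y * X))"
    using lower gap_pos r by (auto simp: field_simps)
  also have "\<dots> \<le> \<delta> * norm y / (r * ((C - 1) * \<delta> powr \<epsilon>))"
    using lower gap_pos r assms(6) by (intro frac_le mult_left_mono) auto
  also have "\<dots> = norm y / (r * (C - 1)) * (\<delta> / \<delta> powr \<epsilon>)" by (simp add: ac_simps)
  also have "\<delta> / \<delta> powr \<epsilon> = \<delta> powr (1 - \<epsilon>)" using assms(6) by (simp add: powr_diff)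
  finally show ?thesis unfolding r_def .
qed

lemma powr_majorant_tendsto_zero:
  fixes K p :: real
  assumes "0 < p"
  shows "((\<lambda>\<delta>. K * \<delta> powr p) \<longlongrightarrow> 0) (at_right 0)"
proof -
  have "((\<lambda>\<delta>::real. \<delta> powr p) \<longlongrightarrow> 0) (at_right 0)"
  proof (rule tendsto_zero_powrI[OF tendsto_ident_at])
    show "\<forall>\<^sub>F x in at_right 0. 0 \<le> (x::real)"
      using eventually_at_right_less[of "0::real"] by (rule eventually_mono) simp
  qed (use assms in auto)
  then show ?thesis by (rule tendsto_mult_right_zero)
qed

theorem lemma2p9:
  fixes A :: "real^'m^'m" and f y :: "real^'m"
    and q \<alpha>0 C \<epsilon> :: real and fd :: "real \<Rightarrow> real^'m"
  assumes "f \<in> range (\<lambda>x. A *v x)"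
    and "min_norm_solution A f y"
    and "0 < q" "q < 1" "0 < \<alpha>0" "1 < C" "0 < \<epsilon>" "\<epsilon> < 1"
    and "\<And>\<delta>. 0 < \<delta> \<Longrightarrow> \<delta> < 1 \<Longrightarrow> norm (fd \<delta> - f) \<le> \<delta>"
    and "\<And>\<delta>. 0 < \<delta> \<Longrightarrow> \<delta> < 1 \<Longrightarrow>
           (1 - q) * \<alpha>0 * q * norm (matrix_inv (Qreg A (\<alpha>0 * q)) *v fd \<delta>) > C * \<delta> powr \<epsilon>"
  shows "((\<lambda>\<delta>. \<delta> / sqrt (\<alpha>0 * q ^ (LEAST n. 1 \<le> n \<and> Gseq A q \<alpha>0 (fd \<delta>) n \<le> C * \<delta> powr \<epsilon>)))
           \<longlongrightarrow> 0) (at_right 0)"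
proof -
  let ?F = "\<lambda>\<delta>. \<delta> / sqrt (\<alpha>0 * q ^ (LEAST n. 1 \<le> n \<and> Gseq A q \<alpha>0 (fd \<delta>) n \<le> C * \<delta> powr \<epsilon>))"
  define K where "K = norm y / (sqrt q * (C - 1))"
  have "A *v y = f" using assms(2) unfolding min_norm_solution_def by blast
  then have data: "norm (fd \<delta> - A *v y) \<le> \<delta>" if "0 < \<delta>" "\<delta> < 1" for \<delta>
    using assms(9)[OF that] by simp
  have window: "eventually (\<lambda>\<delta>. 0 < \<delta> \<and> \<delta> < 1) (at_right (0::real))"
    using eventually_at_right_real[of 0 1] by simp
  have "eventually (\<lambda>\<delta>. 0 \<le> ?F \<delta>) (at_right 0)"
    using window by (rule eventually_mono) (use assms(3,5) in auto)
  moreover have "eventually (\<lambda>\<delta>. ?F \<delta> \<le> K * \<delta> powr (1 - \<epsilon>)) (at_right 0)"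
    using window
  proof (rule eventually_mono, elim conjE)
    fix \<delta> :: real assume \<delta>: "0 < \<delta>" "\<delta> < 1"
    show "?F \<delta> \<le> K * \<delta> powr (1 - \<epsilon>)"
      using stopping_step_size_bound[OF assms(3-6,8) \<delta> data[OF \<delta>] assms(10)[OF \<delta>]]
      unfolding K_def .
  qed
  ultimately show ?thesis
    using tendsto_sandwich[OF _ _ tendsto_const powr_majorant_tendsto_zero] assms(8) by simp
qed

end
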